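(* Let $k\in\hat I$, $u\in\mathbb C^\times$ and let $\lambda$ be a partition. In the Fock module $\mathcal F^{(k)}(u)$, for every $i\in\hat I$ the series $K_i^\pm(z)$ act on $|\lambda\rangle$ by the expansions in $z^{\mp1}$ of $$\prod_{(x,y)\in CV_i^{(k)}(\lambda)}\psi(q_3^xq_1^yq_2u/z)\prod_{(x,y)\in CC_i^{(k)}(\lambda)}\psi(q_3^xq_1^yq_2^2u/z)^{-1}.$$ In particular, $K_i|\lambda\rangle=q^{|CV_i^{(k)}(\lambda)|-|CC_i^{(k)}(\lambda)|}|\lambda\rangle$.
   Context: Fix $n\ge3$ and let $\hat I=\{0,\dots,n-1\}$, with indices mod $n$; $a\equiv b$ means $n\mid a-b$. Let $q,d\in\mathbb C^\times$ and $q_1=d/q$, $q_2=q^2$, $q_3=1/(dq)$, assumed generic: $q_1^aq_2^bq_3^c=1$ ($a,b,c\in\mathbb Z$) only if $a=b=c$. Let $\psi(z)=\frac{q-q^{-1}z}{1-z}$. The series $K_i^\pm(z)=K_i^{\pm1}\exp(\pm(q-q^{-1})\sum_{m\ge1}H_{i,\pm m}z^{\mp m})$ are Cartan generating series of the quantum toroidal algebra $\mathcal E_n$. Only their action on the Fock module matters here, so no further structure of $\mathcal E_n$ is needed. The Fock module $\mathcal F^{(k)}(u)$ has basis $|\lambda\rangle$ indexed by partitions. On it, $K_i^\pm(z)$ acts diagonally with eigenvalue on $|\lambda\rangle$ given by the expansion in $z^{\mp1}$ of $$\prod_{s\ge1,\ \lambda_s+i\equiv s+k}\psi(q_1^{\lambda_s-1}q_3^{s-1}u/z)\prod_{s\ge1,\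 \lambda_s+i+1\equiv s+k}\psi(q_1^{\lambda_s-1}q_3^{s-2}u/z)^{-1}.$$ The product is truncated at any $r$ with $\lambda_r=0$ and $i\equiv r+k$; the factors with $s\ge r$ multiply to $1$. Corners: let $\lambda'$ be the conjugate partition, $\lambda'_y=|\{x:\lambda_x\ge y\}|$. - A pair $(x,y)\in\mathbb Z_{\ge1}^2$ is a convex corner of $\lambda$ if $\lambda'_{y+1}<\lambda'_y=x$. - It is a concave corner if $\lambda'_y=x-1$ and either $y=1$ or $\lambda'_{y-1}>x-1$. Let $CV_i^{(k)}(\lambda)$ (resp. $CC_i^{(k)}(\lambda)$) be the set of convex (resp. concave) corners $(x,y)$ with $k+x-y\equiv i$; this is the set of corners of color $i$. *)

theory Defs
  imports Complex_Main "HOL-Computational_Algebra.Formal_Power_Series"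
begin

definition modeq :: "nat \<Rightarrow> int \<Rightarrow> int \<Rightarrow> bool" where
  "modeq n a b \<longleftrightarrow> int n dvd (a - b)"

definition is_partition :: "nat list \<Rightarrow> bool" where
  "is_partition lam \<longleftrightarrow> sorted_wrt (\<ge>) lam \<and> (\<forall>p\<in>set lam. p > 0)"

definition part :: "nat list \<Rightarrow> nat \<Rightarrow> nat" where
  "part lam s = (if 1 \<le> s \<and> s \<le> length lam then lam ! (s - 1) else 0)"

definition size_part :: "nat list \<Rightarrow> nat" where
  "size_part lam = sum_list lam"

definition conjp :: "nat list \<Rightarrow> nat \<Rightarrow> nat" where
  "conjp lam y = card {x. 1 \<le> x \<and> y \<le> part lam x}"

definition convex_corners :: "nat \<Rightarrow> nat \<Rightarrow> nat list \<Rightarrow> nat \<Rightarrow> (nat \<times> nat) set" where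
  "convex_corners n k lam i = {(x, y). 1 \<le> x \<and> 1 \<le> y \<and>
      conjp lam (y + 1) < conjp lam y \<and> conjp lam y = x \<and>
      modeq n (int k + int x - int y) (int i)}"

definition concave_corners :: "nat \<Rightarrow> nat \<Rightarrow> nat list \<Rightarrow> nat \<Rightarrow> (nat \<times> nat) set" where
  "concave_corners n k lam i = {(x, y). 1 \<le> x \<and> 1 \<le> y \<and>
      int (conjp lam y) = int x - 1 \<and> (y = 1 \<or> int (conjp lam (y - 1)) > int x - 1) \<and>
      modeq n (int k + int x - int y) (int i)}"

definition qq1 :: "complex \<Rightarrow> complex \<Rightarrow> complex" where "qq1 q d = d / q"
definition qq2 :: "complex \<Rightarrow> complex \<Rightarrow> complex" where "qq2 q d = q ^ 2"
definition qq3 :: "complex \<Rightarrow> complex \<Rightarrow> complex" where "qq3 q d = 1 / (d * q)"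

definition generic :: "complex \<Rightarrow> complex \<Rightarrow> bool" where
  "generic q d \<longleftrightarrow> (\<forall>a b c :: int.
     (qq1 q d) powi a * (qq2 q d) powi b * (qq3 q d) powi c = 1 \<longrightarrow> a = b \<and> b = c)"

text \<open>Expansion of psi(a/z), psi(w) = (q - q^{-1} w)/(1 - w).
  If pl = True: expansion in z^{-1}, written as a power series in the variable w = z^{-1}:
     psi(a w) = (q - (a/q) w) / (1 - a w).
  If pl = False: expansion in z, as a power series in z (for a \<noteq> 0):
     psi(a/z) = (q^{-1} - (q/a) z) / (1 - z/a).\<close>
definition psi_exp :: "bool \<Rightarrow> complex \<Rightarrow> complex \<Rightarrow> complex fps" where
  "psi_exp pl q a = (if pl
     then (fps_const q - fps_const (a / q) * fps_X) * inverse (1 - fps_const a * fps_X)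
     else (fps_const (1 / q) - fps_const (q / a) * fps_X) * inverse (1 - fps_const (1 / a) * fps_X))"

definition trunc_pt :: "nat \<Rightarrow> nat \<Rightarrow> nat list \<Rightarrow> nat \<Rightarrow> nat" where
  "trunc_pt n k lam i = (LEAST r. 1 \<le> r \<and> part lam r = 0 \<and> modeq n (int i) (int r + int k))"

text \<open>Eigenvalue of K_i^{+} (pl = True) resp. K_i^{-} (pl = False) on |lambda> in F^{(k)}(u),
  as defined for the Fock module (the product truncated at r = trunc_pt).\<close>
definition K_fock :: "bool \<Rightarrow> complex \<Rightarrow> complex \<Rightarrow> nat \<Rightarrow> nat \<Rightarrow> complex \<Rightarrow> nat list \<Rightarrow> nat \<Rightarrow> complex fps" where
  "K_fock pl q d n k u lam i =
     (let r = trunc_pt n k lam i in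
      (\<Prod>s\<in>{s. 1 \<le> s \<and> s < r \<and> modeq n (int (part lam s) + int i) (int s + int k)}.
          psi_exp pl q ((qq1 q d) powi (int (part lam s) - 1) * (qq3 q d) powi (int s - 1) * u))
      * (\<Prod>s\<in>{s. 1 \<le> s \<and> s < r \<and> modeq n (int (part lam s) + int i + 1) (int s + int k)}.
          inverse (psi_exp pl q ((qq1 q d) powi (int (part lam s) - 1) * (qq3 q d) powi (int s - 2) * u))))"

definition K_corner :: "bool \<Rightarrow> complex \<Rightarrow> complex \<Rightarrow> nat \<Rightarrow> nat \<Rightarrow> complex \<Rightarrow> nat list \<Rightarrow> nat \<Rightarrow> complex fps" where
  "K_corner pl q d n k u lam i =
      (\<Prod>(x, y)\<in>convex_corners n k lam i.
          psi_exp pl q ((qq3 q d) ^ x * (qq1 q d) ^ y * qq2 q d * u))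
      * (\<Prod>(x, y)\<in>concave_corners n k lam i.
          inverse (psi_exp pl q ((qq3 q d) ^ x * (qq1 q d) ^ y * (qq2 q d) ^ 2 * u)))"

text \<open>Eigenvalue of K_i on |lambda>: the constant term of the expansion of K_i^+(z).\<close>
definition K0_fock :: "complex \<Rightarrow> complex \<Rightarrow> nat \<Rightarrow> nat \<Rightarrow> complex \<Rightarrow> nat list \<Rightarrow> nat \<Rightarrow> complex" where
  "K0_fock q d n k u lam i = fps_nth (K_fock True q d n k u lam i) 0"

end

theory Submission
  imports Defs
begin

text \<open>Group the factors of the Fock-module product by rows. When \<lambda>_{s+1} = \<lambda>_s > 0, the
  numerator factor of row s and the denominator factor of row s+1 have the same argument and cancel.
  What survives are the numerator factors of the rows with \<lambda>_{s+1} < \<lambda>_s, i.e. of the convex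
  corners (s, \<lambda>_s), and the denominator factors of the rows with s = 1 or \<lambda>_s < \<lambda>_{s-1}, i.e. of
  the concave corners (s, \<lambda>_s + 1). Since q_1 q_2 q_3 = 1, the row argument q_1^{\<lambda>_s - 1} q_3^{s-1} u
  is the corner argument.\<close>

lemma part_antimono:
  assumes "is_partition lam" and "1 \<le> s" and "s \<le> t"
  shows "part lam t \<le> part lam s"
proof (cases "s < t \<and> t \<le> length lam")
  case True
  then have "lam ! (t - 1) \<le> lam ! (s - 1)"
    using assms sorted_wrt_nth_less[of "(\<ge>)" lam "s - 1" "t - 1"]
    unfolding is_partition_def by auto
  then show ?thesis using True assms unfolding part_def by auto
qed (use assms in \<open>auto simp: part_def\<close>)

lemma part_pos_iff:
  assumes "is_partition lam"
  shows "0 < part lam s \<longleftrightarrow> 1 \<le> s \<and> s \<le> length lam"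
  using assms nth_mem[of "s - 1" lam] unfolding part_def is_partition_def by auto

lemma down_closed_eq_atLeastAtMost:
  fixes S :: "nat set"
  assumes "finite S" and "S \<subseteq> {1..}" and "\<And>a b. a \<in> S \<Longrightarrow> 1 \<le> b \<Longrightarrow> b \<le> a \<Longrightarrow> b \<in> S"
  shows "S = {1..card S}"
proof (cases "S = {}")
  case False
  then have "Max S \<in> S" using assms(1) by simp
  have "S = {1..Max S}"
  proof
    show "S \<subseteq> {1..Max S}" using assms(1,2) by auto
    show "{1..Max S} \<subseteq> S" using assms(3)[OF \<open>Max S \<in> S\<close>] by auto
  qed
  then show ?thesis by (metis card_atLeastAtMost diff_Suc_1)
qed simp

lemma le_conjp_iff:
  assumes "is_partition lam" and "1 \<le> y" and "1 \<le> x"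
  shows "x \<le> conjp lam y \<longleftrightarrow> y \<le> part lam x"
proof -
  define S where "S = {x. 1 \<le> x \<and> y \<le> part lam x}"
  have "S \<subseteq> {1..length lam}"
    using assms part_pos_iff[OF assms(1)] unfolding S_def by fastforce
  then have "S = {1..card S}"
    by (intro down_closed_eq_atLeastAtMost)
      (auto simp: S_def dest: finite_subset intro: order_trans[OF _ part_antimono[OF assms(1)]])
  then have "x \<le> conjp lam y \<longleftrightarrow> x \<in> S"
    using assms(3) unfolding conjp_def S_def[symmetric] by (metis atLeastAtMost_iff)
  then show ?thesis using assms(3) unfolding S_def by simp
qed

definition convex_rows :: "nat \<Rightarrow> nat \<Rightarrow> nat list \<Rightarrow> nat \<Rightarrow> nat set" where
  "convex_rows n k lam i = {x. 1 \<le> x \<and> part lam (Suc x) < part lam x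
     \<and> modeq n (int k + int x - int (part lam x)) (int i)}"

definition concave_rows :: "nat \<Rightarrow> nat \<Rightarrow> nat list \<Rightarrow> nat \<Rightarrow> nat set" where
  "concave_rows n k lam i = {x. 1 \<le> x \<and> (x = 1 \<or> part lam x < part lam (x - 1))
     \<and> modeq n (int k + int x - int (part lam x + 1)) (int i)}"

lemma convex_corners_eq_image:
  assumes "is_partition lam"
  shows "convex_corners n k lam i = (\<lambda>x. (x, part lam x)) ` convex_rows n k lam i"
proof -
  have "(x, y) \<in> convex_corners n k lam i \<longleftrightarrow> x \<in> convex_rows n k lam i \<and> y = part lam x"
    for x y
    using le_conjp_iff[OF assms, of y x] le_conjp_iff[OF assms, of y "Suc x"]
      le_conjp_iff[OF assms, of "Suc y" x]
    unfolding convex_corners_def convex_rows_def by auto (metis le_antisym not_less_eq_eq)+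
  then show ?thesis by auto
qed

lemma concave_corners_eq_image:
  assumes "is_partition lam"
  shows "concave_corners n k lam i = (\<lambda>x. (x, part lam x + 1)) ` concave_rows n k lam i"
proof -
  have "(x, y) \<in> concave_corners n k lam i \<longleftrightarrow> x \<in> concave_rows n k lam i \<and> y = part lam x + 1"
    for x y
  proof (cases "1 \<le> x \<and> 1 \<le> y")
    case True
    have "conjp lam y = x - 1 \<longleftrightarrow> \<not> x \<le> conjp lam y \<and> (x = 1 \<or> x - 1 \<le> conjp lam y)"
      using True by linarith
    also have "\<dots> \<longleftrightarrow> part lam x < y \<and> (x = 1 \<or> y \<le> part lam (x - 1))"
      using True le_conjp_iff[OF assms, of y x] le_conjp_iff[OF assms, of y "x - 1"]
      by (cases "x = 1") auto
    finally have "conjp lam y = x - 1 \<longleftrightarrow> part lam x < y \<and> (x = 1 \<or> y \<le> part lam (x - 1))" .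
    moreover have "int x - 1 < int (conjp lam (y - 1)) \<longleftrightarrow> y - 1 \<le> part lam x" if "y \<noteq> 1"
    proof -
      have y1: "1 \<le> y - 1" using True that by linarith
      show ?thesis using True le_conjp_iff[OF assms y1, of x] by linarith
    qed
    ultimately have rows: "conjp lam y = x - 1 \<and> (y = 1 \<or> int x - 1 < int (conjp lam (y - 1)))
        \<longleftrightarrow> y = part lam x + 1 \<and> (x = 1 \<or> part lam x < part lam (x - 1))"
      by (cases "y = 1") auto
    have "(x, y) \<in> concave_corners n k lam i \<longleftrightarrow> (conjp lam y = x - 1
        \<and> (y = 1 \<or> int x - 1 < int (conjp lam (y - 1)))) \<and> modeq n (int k + int x - int y) (int i)"
      using True unfolding concave_corners_def by auto
    also have "\<dots> \<longleftrightarrow> x \<in> concave_rows n k lam i \<and> y = part lam x + 1"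
      unfolding rows concave_rows_def using True by auto
    finally show ?thesis .
  next
    case False
    then have "(x, y) \<notin> concave_corners n k lam i"
      and "\<not> (x \<in> concave_rows n k lam i \<and> y = part lam x + 1)"
      unfolding concave_corners_def concave_rows_def by auto
    then show ?thesis by blast
  qed
  then show ?thesis by auto
qed

lemma trunc_pt_spec:
  assumes "n > 0"
  shows "1 \<le> trunc_pt n k lam i" and "part lam (trunc_pt n k lam i) = 0"
    and "modeq n (int i) (int (trunc_pt n k lam i) + int k)"
proof -
  define a where "a = int i - int k - int (length lam + 1)"
  define w where "w = length lam + 1 + nat (a mod int n)"
  have "int i - (int w + int k) = int n * (a div int n)"
    using assms unfolding w_def a_def by (simp add: minus_mod_eq_mult_div [symmetric])
  then have "1 \<le> w \<and> part lam w = 0 \<and> modeq n (int i) (int w + int k)"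
    unfolding modeq_def part_def w_def by simp
  from LeastI[of "\<lambda>r. 1 \<le> r \<and> part lam r = 0 \<and> modeq n (int i) (int r + int k)", OF this] show "1 \<le> trunc_pt n k lam i" "part lam (trunc_pt n k lam i) = 0"
    "modeq n (int i) (int (trunc_pt n k lam i) + int k)"
    unfolding trunc_pt_def by auto
qed

lemma trunc_pt_le:
  "1 \<le> s \<Longrightarrow> part lam s = 0 \<Longrightarrow> modeq n (int i) (int s + int k) \<Longrightarrow> trunc_pt n k lam i \<le> s"
  unfolding trunc_pt_def by (rule Least_le) simp

lemma length_less_trunc_pt:
  assumes "is_partition lam" and "n > 0"
  shows "length lam < trunc_pt n k lam i"
  using trunc_pt_spec[OF assms(2)] part_pos_iff[OF assms(1)] by (metis not_less not_gr_zero)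

lemma modeq_color_iff:
  "modeq n (int a + int i) (int s + int k) \<longleftrightarrow> modeq n (int k + int s - int a) (int i)"
proof -
  have "int a + int i - (int s + int k) = - (int k + int s - int a - int i)" by simp
  then show ?thesis unfolding modeq_def by (metis dvd_minus_iff)
qed

lemma modeq_Suc_shift:
  "modeq n (int a + int i + 1) (int (Suc s) + int k) \<longleftrightarrow> modeq n (int a + int i) (int s + int k)"
  unfolding modeq_def by (simp add: algebra_simps)

lemma not_modeq_succ:
  assumes "n \<ge> 2" and "modeq n (a + 1) b"
  shows "\<not> modeq n a b"
proof
  assume "modeq n a b"
  with assms(2) have "int n dvd (a + 1 - b) - (a - b)" unfolding modeq_def by (rule dvd_diff)
  then show False using assms(1) by (simp add: zdvd_imp_le)
qed

definition repeated_rows :: "nat \<Rightarrow> nat \<Rightarrow> nat list \<Rightarrow> nat \<Rightarrow> nat set" where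
  "repeated_rows n k lam i = {s. 1 \<le> s \<and> 0 < part lam (Suc s) \<and> part lam (Suc s) = part lam s
     \<and> modeq n (int (part lam s) + int i) (int s + int k)}"

lemma less_trunc_pt_if_part_pos:
  assumes "is_partition lam" and "n > 0" and "0 < part lam s"
  shows "s < trunc_pt n k lam i"
proof -
  have "s \<le> length lam" using part_pos_iff[OF assms(1)] assms(3) by blast
  then show ?thesis using length_less_trunc_pt[OF assms(1,2)] by (rule le_less_trans)
qed

lemma numerator_rows_eq:
  assumes "is_partition lam" and "n > 0"
  shows "{s. 1 \<le> s \<and> s < trunc_pt n k lam i \<and> modeq n (int (part lam s) + int i) (int s + int k)}
    = convex_rows n k lam i \<union> repeated_rows n k lam i" (is "?S = _")
proof -
  have pos: "0 < part lam s" if "s \<in> ?S" for s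
  proof (rule ccontr)
    assume "\<not> 0 < part lam s"
    with that have "trunc_pt n k lam i \<le> s" by (intro trunc_pt_le) auto
    with that show False by simp
  qed
  show ?thesis
  proof (intro set_eqI iffI)
    fix s assume s: "s \<in> ?S"
    then have "part lam (Suc s) \<le> part lam s" using part_antimono[OF assms(1)] by simp
    then consider "part lam (Suc s) < part lam s" | "part lam (Suc s) = part lam s" by linarith
    then show "s \<in> convex_rows n k lam i \<union> repeated_rows n k lam i"
      using s pos[OF s] unfolding convex_rows_def repeated_rows_def modeq_color_iff by cases auto
  next
    fix s assume "s \<in> convex_rows n k lam i \<union> repeated_rows n k lam i"
    then have "1 \<le> s" "0 < part lam s" "modeq n (int k + int s - int (part lam s)) (int i)"
      unfolding convex_rows_def repeated_rows_def modeq_color_iff by auto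
    then show "s \<in> ?S" using less_trunc_pt_if_part_pos[OF assms] modeq_color_iff by simp
  qed
qed

lemma concave_row_less_trunc_pt:
  assumes "is_partition lam" and "n \<ge> 2" and "s \<in> concave_rows n k lam i"
  shows "s < trunc_pt n k lam i"
proof -
  have "s \<le> length lam + 1"
    using assms(3) part_pos_iff[OF assms(1), of "s - 1"] unfolding concave_rows_def by auto
  moreover have "s \<noteq> trunc_pt n k lam i"
  proof
    assume s: "s = trunc_pt n k lam i"
    then have "part lam s = 0" and "modeq n (int i) (int s + int k)"
      using trunc_pt_spec assms(2) by auto
    moreover have "modeq n (int (part lam s + 1) + int i) (int s + int k)"
      using assms(3) modeq_color_iff unfolding concave_rows_def by blast
    ultimately show False using not_modeq_succ[OF assms(2)] by (simp add: add.commute)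
  qed
  ultimately show ?thesis using length_less_trunc_pt[OF assms(1), of n k i] assms(2) by linarith
qed

lemma denominator_rows_eq:
  assumes "is_partition lam" and "n \<ge> 2"
  shows "{s. 1 \<le> s \<and> s < trunc_pt n k lam i \<and> modeq n (int (part lam s) + int i + 1) (int s + int k)}
    = concave_rows n k lam i \<union> Suc ` repeated_rows n k lam i" (is "?S = _")
proof (intro set_eqI iffI)
  fix s assume s: "s \<in> ?S"
  show "s \<in> concave_rows n k lam i \<union> Suc ` repeated_rows n k lam i"
  proof (cases "s = 1 \<or> part lam s < part lam (s - 1)")
    case True
    then show ?thesis
      using s modeq_color_iff[of n "part lam s + 1" i s k] unfolding concave_rows_def by (simp add: ac_simps)
  next
    case False
    then have s': "s = Suc (s - 1)" "1 \<le> s - 1" using s by auto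
    then have eq: "part lam s = part lam (s - 1)"
      using False part_antimono[OF assms(1), of "s - 1" s] by linarith
    have m: "modeq n (int (part lam (s - 1)) + int i) (int (s - 1) + int k)"
      using s modeq_Suc_shift[of n "part lam s" i "s - 1" k] s' eq by simp
    have "0 < part lam s"
    proof (rule ccontr)
      assume "\<not> 0 < part lam s"
      then have "trunc_pt n k lam i \<le> s - 1" using trunc_pt_le m eq s' by simp
      then show False using s by auto
    qed
    then have "s - 1 \<in> repeated_rows n k lam i" using m eq s' unfolding repeated_rows_def by simp
    then show ?thesis using s' by (metis UnI2 image_eqI)
  qed
next
  fix s assume "s \<in> concave_rows n k lam i \<union> Suc ` repeated_rows n k lam i"
  then show "s \<in> ?S"
  proof
    assume s: "s \<in> concave_rows n k lam i"
    then show "s \<in> ?S"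
      using concave_row_less_trunc_pt[OF assms s] modeq_color_iff[of n "part lam s + 1" i s k]
      unfolding concave_rows_def by (simp add: ac_simps)
  next
    assume "s \<in> Suc ` repeated_rows n k lam i"
    then obtain t where t: "t \<in> repeated_rows n k lam i" and "s = Suc t" by blast
    then show "s \<in> ?S"
      using less_trunc_pt_if_part_pos[OF assms(1)] assms(2) modeq_Suc_shift
      unfolding repeated_rows_def by auto
  qed
qed

lemma prod_union_shift_cancel:
  fixes f g :: "nat \<Rightarrow> 'a::comm_monoid_mult"
  assumes "finite (A \<union> E)" and "finite (B \<union> Suc ` E)"
    and "A \<inter> E = {}" and "B \<inter> Suc ` E = {}"
    and "\<And>t. t \<in> E \<Longrightarrow> f t * g (Suc t) = 1"
  shows "prod f (A \<union> E) * prod g (B \<union> Suc ` E) = prod f A * prod g B"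
proof -
  have "prod f E * prod g (Suc ` E) = (\<Prod>t\<in>E. f t * g (Suc t))"
    by (simp add: prod.reindex prod.distrib)
  also have "\<dots> = 1" using assms(5) by simp
  finally have cancel: "prod f E * prod g (Suc ` E) = 1" .
  have "prod f (A \<union> E) * prod g (B \<union> Suc ` E)
      = prod f A * prod g B * (prod f E * prod g (Suc ` E))"
    using assms(1-4) by (simp add: prod.union_disjoint ac_simps)
  then show ?thesis unfolding cancel by simp
qed

lemma psi_exp_nth_0: "fps_nth (psi_exp pl q a) 0 = (if pl then q else 1 / q)"
  unfolding psi_exp_def by simp

lemma psi_exp_mult_inverse:
  assumes "q \<noteq> 0"
  shows "psi_exp pl q a * inverse (psi_exp pl q a) = 1"
  using assms by (intro inverse_mult_eq_1') (simp add: psi_exp_nth_0)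

lemma K_fock_eq_row_products:
  assumes "is_partition lam" and "n \<ge> 2" and "q \<noteq> 0"
  shows "K_fock pl q d n k u lam i =
    (\<Prod>s\<in>convex_rows n k lam i.
       psi_exp pl q (qq1 q d powi (int (part lam s) - 1) * qq3 q d powi (int s - 1) * u))
    * (\<Prod>s\<in>concave_rows n k lam i.
       inverse (psi_exp pl q (qq1 q d powi (int (part lam s) - 1) * qq3 q d powi (int s - 2) * u)))"
proof -
  define f where "f s = psi_exp pl q (qq1 q d powi (int (part lam s) - 1) * qq3 q d powi (int s - 1) * u)"
    for s
  define g where "g s = inverse (psi_exp pl q
      (qq1 q d powi (int (part lam s) - 1) * qq3 q d powi (int s - 2) * u))" for s
  have "n > 0" using assms(2) by simp
  note num = numerator_rows_eq[OF assms(1) \<open>n > 0\<close>, of k i]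
  note den = denominator_rows_eq[OF assms(1,2), of k i]
  have "K_fock pl q d n k u lam i = prod f (convex_rows n k lam i \<union> repeated_rows n k lam i)
      * prod g (concave_rows n k lam i \<union> Suc ` repeated_rows n k lam i)"
    unfolding K_fock_def Let_def f_def g_def num den ..
  also have "\<dots> = prod f (convex_rows n k lam i) * prod g (concave_rows n k lam i)"
  proof (rule prod_union_shift_cancel)
    show "finite (convex_rows n k lam i \<union> repeated_rows n k lam i)"
      unfolding num[symmetric] by (rule finite_subset[of _ "{..<trunc_pt n k lam i}"]) auto
    show "finite (concave_rows n k lam i \<union> Suc ` repeated_rows n k lam i)"
      unfolding den[symmetric] by (rule finite_subset[of _ "{..<trunc_pt n k lam i}"]) auto
    show "convex_rows n k lam i \<inter> repeated_rows n k lam i = {}"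
      unfolding convex_rows_def repeated_rows_def by auto
    show "concave_rows n k lam i \<inter> Suc ` repeated_rows n k lam i = {}"
      unfolding concave_rows_def repeated_rows_def by auto
    show "f t * g (Suc t) = 1" if "t \<in> repeated_rows n k lam i" for t
    proof -
      have "part lam (Suc t) = part lam t" using that unfolding repeated_rows_def by simp
      moreover have "int (Suc t) - 2 = int t - 1" by simp
      ultimately show ?thesis unfolding f_def g_def using psi_exp_mult_inverse[OF assms(3)] by simp
    qed
  qed
  finally show ?thesis unfolding f_def g_def .
qed

lemma power_mult_power_mult_power_eq_powi:
  fixes a b c :: "'a::field"
  assumes "a \<noteq> 0" and "b \<noteq> 0" and "a * b * c = 1"
  shows "b ^ x * a ^ y * c ^ m = a powi (int y - int m) * b powi (int x - int m)"
proof -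
  have "a ^ m * (b ^ m * c ^ m) = 1"
    using assms(3) by (metis power_mult_distrib power_one mult.assoc)
  then show ?thesis using assms(1,2) by (simp add: power_int_diff field_simps)
qed

lemma qq_product_eq_1: "q \<noteq> 0 \<Longrightarrow> d \<noteq> 0 \<Longrightarrow> qq1 q d * qq3 q d * qq2 q d = 1"
  unfolding qq1_def qq2_def qq3_def by (simp add: field_simps power2_eq_square)

lemma K_corner_eq_row_products:
  assumes "is_partition lam" and "q \<noteq> 0" and "d \<noteq> 0"
  shows "K_corner pl q d n k u lam i =
    (\<Prod>s\<in>convex_rows n k lam i.
       psi_exp pl q (qq1 q d powi (int (part lam s) - 1) * qq3 q d powi (int s - 1) * u))
    * (\<Prod>s\<in>concave_rows n k lam i.
       inverse (psi_exp pl q (qq1 q d powi (int (part lam s) - 1) * qq3 q d powi (int s - 2) * u)))"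
proof -
  have nz: "qq1 q d \<noteq> 0" "qq3 q d \<noteq> 0" using assms(2,3) unfolding qq1_def qq3_def by auto
  note weight = power_mult_power_mult_power_eq_powi[OF nz qq_product_eq_1[OF assms(2,3)]]
  have "inj_on (\<lambda>x. (x, part lam x)) A" "inj_on (\<lambda>x. (x, part lam x + 1)) A" for A
    by (auto intro: inj_onI)
  then show ?thesis
    unfolding K_corner_def convex_corners_eq_image[OF assms(1)] concave_corners_eq_image[OF assms(1)]
    using weight[of _ _ 1] weight[of _ _ 2] by (simp add: prod.reindex)
qed

lemma fps_nth_prod_0: "fps_nth (prod f A) 0 = (\<Prod>x\<in>A. fps_nth (f x) 0)"
  by (induct A rule: infinite_finite_induct) simp_all

lemma K_corner_nth_0:
  assumes "q \<noteq> 0"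
  shows "fps_nth (K_corner True q d n k u lam i) 0
    = q powi (int (card (convex_corners n k lam i)) - int (card (concave_corners n k lam i)))"
  using assms by (simp add: K_corner_def fps_nth_prod_0 case_prod_beta psi_exp_nth_0 power_int_diff
      divide_inverse power_inverse)

theorem mainTheorem4:
  fixes q d u :: complex and n k i :: nat and lam :: "nat list"
  assumes "n \<ge> 3" and "q \<noteq> 0" and "d \<noteq> 0" and "generic q d"
    and "k < n" and "u \<noteq> 0" and "is_partition lam" and "i < n"
  shows "(\<forall>pl. K_fock pl q d n k u lam i = K_corner pl q d n k u lam i)
    \<and> K0_fock q d n k u lam i
        = q powi (int (card (convex_corners n k lam i)) - int (card (concave_corners n k lam i)))"
proof -
  have "n \<ge> 2" using assms(1) by simp
  have K: "K_fock pl q d n k u lam i = K_corner pl q d n k u lam i" for pl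
    using K_fock_eq_row_products[OF assms(7) \<open>n \<ge> 2\<close> assms(2)]
      K_corner_eq_row_products[OF assms(7) assms(2,3)] by simp
  then show ?thesis using K_corner_nth_0[OF assms(2)] unfolding K0_fock_def by simp
qed

end
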